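(* Let $\Gamma$ be a finite connected trivalent ribbon graph with set of oriented edges $E$, let $z:E\to\mathbb{R}$ satisfy $z(\rho_1\gamma)=z(\gamma)$ for all $\gamma\in E$, and fix $\epsilon\in E$. Then the image $\Delta(\Gamma,z,\epsilon):=CHF(B(E,\epsilon))\subset PSL_2(\mathbb{R})$ is a Fuchsian group (a discrete subgroup of $PSL_2(\mathbb{R})$).
   Context: A trivalent ribbon graph is a graph all of whose vertices have valency $3$, together with a cyclic order on the edge-ends at each vertex. $E$ denotes the set of oriented edges of $\Gamma$. The group $C_2^+[3]=\langle \rho_0,\rho_1 \mid \rho_1^2=\rho_0^3=1\rangle$ acts on $E$: $\rho_0$ sends an oriented edge to the next oriented edge (in the cyclic order, counterclockwise) with the same origin, and $\rho_1$ reverses the orientation of the edge. For $\epsilon\in E$, $B(E,\epsilon)=\{w\in C_2^+[3] : w\epsilon=\epsilon\}$ is its stabilizer. For $a\in\mathbb{R}$ put $X_a=\begin{pmatrix}0&-e^{a/2}\\ e^{-a/2}&0\end{pmatrix}$ and $L=\begin{pmatrix}0&1\\-1&-1\end{pmatrix}$, regarded in $PSL_2(\mathbb{R})$. The map $CHF: C_2^+[3]\to PSL_2(\mathbb{R})$ (depending on $\Gamma,z,\epsilon$) is defined inductively on words by $CHF(1)=1$, $CHF(\rho_0 w)=L\cdot CHF(w)$, $CHF(\rho_1 w)=X_{z(w\epsilon)}\cdot CHF(w)$; it is well defined on the group since $L^3=1$ and $X_aX_a=1$ in $PSL_2(\mathbb{R})$. Its restriction to $B(E,\epsilon)$ is a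 homomorphism, so $\Delta(\Gamma,z,\epsilon)$ is a subgroup of $PSL_2(\mathbb{R})$. *)

theory Defs
  imports "HOL-Analysis.Analysis"
begin

text \<open>Elements of PSL_2(R) are represented by matrices in SL_2(R) (type real^2^2),
  two matrices A, B representing the same element iff B = A or B = -A.\<close>

definition mat2 :: "real \<Rightarrow> real \<Rightarrow> real \<Rightarrow> real \<Rightarrow> real^2^2" where
  "mat2 a b c d = vector [vector [a, b], vector [c, d]]"

definition Xmat :: "real \<Rightarrow> real^2^2" where
  "Xmat a = mat2 0 (- exp (a/2)) (exp (- a/2)) 0"

definition Lmat :: "real^2^2" where
  "Lmat = mat2 0 1 (-1) (-1)"

definition psl_eq :: "real^2^2 \<Rightarrow> real^2^2 \<Rightarrow> bool" where
  "psl_eq A B \<longleftrightarrow> B = A \<or> B = - A"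

text \<open>Metric on PSL_2(R) induced from SL_2(R) (inducing the quotient topology).\<close>
definition psl_dist :: "real^2^2 \<Rightarrow> real^2^2 \<Rightarrow> real" where
  "psl_dist A B = min (norm (A - B)) (norm (A + B))"

definition psl_subgroup :: "(real^2^2) set \<Rightarrow> bool" where
  "psl_subgroup S \<longleftrightarrow> (\<forall>A\<in>S. det A = 1) \<and> (\<exists>A\<in>S. psl_eq A (mat 1))
     \<and> (\<forall>A\<in>S. \<forall>B\<in>S. \<exists>C\<in>S. psl_eq C (A ** B))
     \<and> (\<forall>A\<in>S. \<exists>C\<in>S. psl_eq C (matrix_inv A))"

definition psl_discrete :: "(real^2^2) set \<Rightarrow> bool" where
  "psl_discrete S \<longleftrightarrow> (\<forall>A\<in>S. \<exists>e>0. \<forall>B\<in>S. psl_dist A B < e \<longrightarrow> psl_eq A B)"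

definition fuchsian :: "(real^2^2) set \<Rightarrow> bool" where
  "fuchsian S \<longleftrightarrow> psl_subgroup S \<and> psl_discrete S"

text \<open>Words in the generators of C_2^+[3]: True = rho_1, False = rho_0.
  Every element of the group is represented by such a (positive) word, since both
  generators have finite order.  The word a # w means (generator a) * w.\<close>
fun act :: "('e \<Rightarrow> 'e) \<Rightarrow> ('e \<Rightarrow> 'e) \<Rightarrow> bool list \<Rightarrow> 'e \<Rightarrow> 'e" where
  "act r0 r1 [] e = e"
| "act r0 r1 (a # w) e = (if a then r1 else r0) (act r0 r1 w e)"

fun CHF :: "('e \<Rightarrow> 'e) \<Rightarrow> ('e \<Rightarrow> 'e) \<Rightarrow> ('e \<Rightarrow> real) \<Rightarrow> 'e \<Rightarrow> bool list \<Rightarrow> real^2^2" where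
  "CHF r0 r1 z \<epsilon> [] = mat 1"
| "CHF r0 r1 z \<epsilon> (a # w) =
     (if a then Xmat (z (act r0 r1 w \<epsilon>)) else Lmat) ** CHF r0 r1 z \<epsilon> w"

text \<open>Delta(Gamma,z,eps) = CHF(B(E,eps)), B(E,eps) the stabilizer of eps.\<close>
definition Delta :: "('e \<Rightarrow> 'e) \<Rightarrow> ('e \<Rightarrow> 'e) \<Rightarrow> ('e \<Rightarrow> real) \<Rightarrow> 'e \<Rightarrow> (real^2^2) set" where
  "Delta r0 r1 z \<epsilon> = {A. \<exists>w. act r0 r1 w \<epsilon> = \<epsilon> \<and> psl_eq (CHF r0 r1 z \<epsilon> w) A}"

text \<open>A finite connected trivalent ribbon graph, given by its set E of oriented edges,
  rho_0 (rotation at the origin vertex, orbits of size 3) and rho_1 (orientation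
  reversal, a fixed-point-free involution); connected = transitive action.\<close>
definition trivalent_ribbon_graph :: "'e set \<Rightarrow> ('e \<Rightarrow> 'e) \<Rightarrow> ('e \<Rightarrow> 'e) \<Rightarrow> bool" where
  "trivalent_ribbon_graph E r0 r1 \<longleftrightarrow> finite E \<and> E \<noteq> {} \<and>
     r0 permutes E \<and> r1 permutes E \<and>
     (\<forall>e\<in>E. r0 (r0 (r0 e)) = e \<and> r0 e \<noteq> e) \<and>
     (\<forall>e\<in>E. r1 (r1 e) = e \<and> r1 e \<noteq> e)"

definition connected_rg :: "'e set \<Rightarrow> ('e \<Rightarrow> 'e) \<Rightarrow> ('e \<Rightarrow> 'e) \<Rightarrow> bool" where
  "connected_rg E r0 r1 \<longleftrightarrow> (\<forall>e\<in>E. \<forall>e'\<in>E. \<exists>w. act r0 r1 w e = e')"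

end

theory Submission
  imports Defs "HOL-Library.Sublist"
begin

(* Since rho_1^2 and rho_0^3 fix every oriented edge and CHF sends them to -1 and 1, the value
   of CHF on a word is determined up to sign by the word with these relators deleted.  A reduced
   word gives a product L^k (X L^j1) ... (X L^jn) X^d with k <= 2 and all ji in {1, 2}, and each
   block X_a L^j is up to sign a nonnegative matrix, [[s, s], [0, 1/s]] or [[s, 0], [1/s, 1/s]]
   with s = exp (a/2).  As z is bounded on the finite set E, say by M, a nonnegative matrix
   multiplied by such a block has a column whose off-diagonal entry is at least exp (-M) times
   its diagonal entry.  Comparing signs and sizes of entries shows that no such product lies
   within exp (-M)/2 of +-1 unless it equals +-1.  So the identity is isolated in Delta, which
   for a subgroup of PSL_2(R) means that it is discrete. *)

section \<open>Matrices of size 2\<close>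

lemma mat2_nth [simp]:
  "mat2 a b c d $ 1 $ 1 = a" "mat2 a b c d $ 1 $ 2 = b"
  "mat2 a b c d $ 2 $ 1 = c" "mat2 a b c d $ 2 $ 2 = d"
  by (simp_all add: mat2_def)

lemma mat2_cases:
  obtains a b c d where "A = mat2 a b c d"
proof
  show "A = mat2 (A$1$1) (A$1$2) (A$2$1) (A$2$2)"
    by (simp add: vec_eq_iff forall_2)
qed

lemma mat2_mult:
  "mat2 a b c d ** mat2 a' b' c' d' =
     mat2 (a*a' + b*c') (a*b' + b*d') (c*a' + d*c') (c*b' + d*d')"
  by (simp add: vec_eq_iff forall_2 matrix_matrix_mult_def sum_2)

lemma mat_1_eq_mat2: "mat 1 = mat2 1 0 0 1"
  by (simp add: vec_eq_iff forall_2 mat_def)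

lemma uminus_mat2: "- mat2 a b c d = mat2 (-a) (-b) (-c) (-d)"
  by (simp add: vec_eq_iff forall_2)

lemma det_mat2: "det (mat2 a b c d) = a*d - b*c"
  by (simp add: det_2)

lemma matrix_mult_uminus_left: "(- A) ** B = - (A ** (B :: 'a::ring_1^'n^'m))"
  by (simp add: vec_eq_iff matrix_matrix_mult_def sum_negf)

lemma matrix_mult_uminus_right: "A ** (- B) = - (A ** (B :: 'a::ring_1^'n^'m))"
  by (simp add: vec_eq_iff matrix_matrix_mult_def sum_negf)

lemma matrix_inv_mult_self:
  fixes A :: "'a::semiring_1^'n^'n"
  assumes "invertible A"
  shows "A ** matrix_inv A = mat 1" "matrix_inv A ** A = mat 1"
  using someI_ex[OF assms[unfolded invertible_def]] by (simp_all add: matrix_inv_def)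

lemma linear_matrix_mult_left: "linear (\<lambda>B :: real^'n^'m. A ** B)"
  by (rule linearI)
    (simp add: matrix_add_ldistrib, simp add: vec_eq_iff matrix_matrix_mult_def sum_distrib_left mult_ac)

lemma abs_entry_le_norm: "\<bar>A$i$j\<bar> \<le> norm (A :: real^'n^'m)"
  by (rule order_trans[OF component_le_norm_cart Finite_Cartesian_Product.norm_nth_le])

lemma det_uminus_2x2: "det (- A :: real^2^2) = det A"
  by (simp add: det_2)

lemma Xmat_mult_self: "Xmat a ** Xmat a = - mat 1"
  by (simp add: Xmat_def mat2_mult mat_1_eq_mat2 uminus_mat2 flip: exp_add)

lemma Lmat_cube: "Lmat ** Lmat ** Lmat = mat 1"
  by (simp add: Lmat_def mat2_mult mat_1_eq_mat2)

lemma det_Xmat: "det (Xmat a) = 1"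
  by (simp add: Xmat_def det_mat2 flip: exp_add)

lemma det_Lmat: "det Lmat = 1"
  by (simp add: Lmat_def det_mat2)

section \<open>The metric on PSL_2(R) and discreteness\<close>

lemma psl_eq_refl [simp]: "psl_eq A A"
  by (simp add: psl_eq_def)

lemma psl_eq_sym: "psl_eq A B \<Longrightarrow> psl_eq B A"
  by (auto simp: psl_eq_def)

lemma psl_eq_trans [trans]: "psl_eq A B \<Longrightarrow> psl_eq B C \<Longrightarrow> psl_eq A C"
  by (auto simp: psl_eq_def)

lemma psl_eq_uminus [simp]: "psl_eq A (- B) \<longleftrightarrow> psl_eq A B" "psl_eq (- A) B \<longleftrightarrow> psl_eq A B"
  by (auto simp: psl_eq_def)

lemma psl_eq_mult: "psl_eq A A' \<Longrightarrow> psl_eq B B' \<Longrightarrow> psl_eq (A ** B) (A' ** B')"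
  by (auto simp: psl_eq_def matrix_mult_uminus_left matrix_mult_uminus_right)

lemma psl_eq_matrix_inv:
  assumes "psl_eq (N ** A) (mat 1)"
  shows "psl_eq N (matrix_inv A)"
proof -
  from assms obtain N' where N': "psl_eq N N'" "N' ** A = mat 1"
    unfolding psl_eq_def by (metis matrix_mult_uminus_left minus_minus)
  then have "invertible A"
    using matrix_left_right_inverse invertible_def by blast
  have "N' = N' ** (A ** matrix_inv A)"
    using matrix_inv_mult_self(1)[OF \<open>invertible A\<close>] by simp
  also have "\<dots> = matrix_inv A"
    using N'(2) by (simp add: matrix_mul_assoc)
  finally show ?thesis
    using N'(1) by simp
qed

lemma psl_dist_uminus [simp]: "psl_dist (- A) B = psl_dist A B" "psl_dist A (- B) = psl_dist A B"
  by (simp_all add: psl_dist_def min.commute norm_minus_commute add.commute flip: diff_conv_add_uminus)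

lemma psl_dist_commute: "psl_dist A B = psl_dist B A"
  by (simp add: psl_dist_def norm_minus_commute add.commute)

lemma psl_dist_cong: "psl_eq A A' \<Longrightarrow> psl_eq B B' \<Longrightarrow> psl_dist A B = psl_dist A' B'"
  by (auto simp: psl_eq_def)

lemma psl_dist_mult_left_le:
  fixes C :: "real^2^2"
  obtains K where "K > 0" "\<And>A B. psl_dist (C ** A) (C ** B) \<le> K * psl_dist A B"
proof -
  have "bounded_linear (\<lambda>B. C ** B)"
    using linear_matrix_mult_left linear_conv_bounded_linear by blast
  then obtain K where "K > 0" and K: "\<And>B :: real^2^2. norm (C ** B) \<le> norm B * K"
    using bounded_linear.pos_bounded by blast
  have "psl_dist (C ** A) (C ** B) \<le> K * psl_dist A B" for A B
  proof -
    have "C ** (A - B) = C ** A - C ** B" "C ** (A + B) = C ** A + C ** B"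
      using linear_diff linear_add linear_matrix_mult_left by blast+
    then show ?thesis
      using K[of "A - B"] K[of "A + B"] \<open>K > 0\<close>
      by (simp add: psl_dist_def mult.commute min_def)
  qed
  with \<open>K > 0\<close> show ?thesis by (rule that)
qed

lemma psl_dist_one_entries:
  assumes "psl_dist Q (mat 1) < c"
  obtains \<sigma> :: real where "\<sigma> = 1 \<or> \<sigma> = -1"
    "\<bar>Q$1$1 - \<sigma>\<bar> < c" "\<bar>Q$1$2\<bar> < c" "\<bar>Q$2$1\<bar> < c" "\<bar>Q$2$2 - \<sigma>\<bar> < c"
proof -
  obtain \<sigma> :: real where \<sigma>: "\<sigma> = 1 \<or> \<sigma> = -1" and "norm (Q - \<sigma> *\<^sub>R mat 1) < c"
    using assms unfolding psl_dist_def min_less_iff_disj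
    by (metis scale_one scaleR_minus1_left diff_minus_eq_add)
  then have "\<bar>(Q - \<sigma> *\<^sub>R mat 1)$i$j\<bar> < c" for i j
    using abs_entry_le_norm order.strict_trans1 by blast
  from this[of 1 1] this[of 1 2] this[of 2 1] this[of 2 2] show thesis
    using that[OF \<sigma>] by (simp add: mat_def)
qed

lemma psl_discrete_if_one_isolated:
  assumes S: "psl_subgroup S" and "0 < c"
    and isolated: "\<And>B. B \<in> S \<Longrightarrow> psl_dist B (mat 1) < c \<Longrightarrow> psl_eq B (mat 1)"
  shows "psl_discrete S"
  unfolding psl_discrete_def
proof
  fix A assume "A \<in> S"
  then have "invertible A"
    using S by (simp add: psl_subgroup_def invertible_det_nz)
  obtain C where "C \<in> S" "psl_eq C (matrix_inv A)"
    using S \<open>A \<in> S\<close> unfolding psl_subgroup_def by blast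
  obtain K where "K > 0"
    and K: "\<And>X Y. psl_dist (matrix_inv A ** X) (matrix_inv A ** Y) \<le> K * psl_dist X Y"
    using psl_dist_mult_left_le by blast
  show "\<exists>e>0. \<forall>B\<in>S. psl_dist A B < e \<longrightarrow> psl_eq A B"
  proof (intro exI[of _ "c / K"] conjI ballI impI)
    show "c / K > 0"
      using \<open>0 < c\<close> \<open>K > 0\<close> by simp
    fix B assume "B \<in> S" "psl_dist A B < c / K"
    obtain D where "D \<in> S" "psl_eq D (C ** B)"
      using S \<open>C \<in> S\<close> \<open>B \<in> S\<close> unfolding psl_subgroup_def by blast
    then have D: "psl_eq D (matrix_inv A ** B)"
      using \<open>psl_eq C (matrix_inv A)\<close> psl_eq_mult psl_eq_refl psl_eq_trans by blast
    have "psl_dist D (mat 1) = psl_dist (matrix_inv A ** B) (matrix_inv A ** A)"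
      using psl_dist_cong[OF D] matrix_inv_mult_self(2)[OF \<open>invertible A\<close>] by simp
    also have "\<dots> \<le> K * psl_dist A B"
      using K psl_dist_commute by metis
    also have "\<dots> < c"
      using \<open>psl_dist A B < c / K\<close> \<open>K > 0\<close> by (simp add: field_simps)
    finally have "psl_eq (matrix_inv A ** B) (mat 1)"
      using isolated \<open>D \<in> S\<close> D psl_eq_sym psl_eq_trans by blast
    then have "psl_eq (A ** (matrix_inv A ** B)) (A ** mat 1)"
      by (rule psl_eq_mult[OF psl_eq_refl])
    then show "psl_eq A B"
      using matrix_inv_mult_self(1)[OF \<open>invertible A\<close>]
      by (simp add: matrix_mul_assoc psl_eq_sym)
  qed
qed

section \<open>Words in rho_0 and rho_1\<close>

lemma act_append: "act r0 r1 (u @ x) e = act r0 r1 u (act r0 r1 x e)"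
  by (induction u) auto

lemma CHF_append: "CHF r0 r1 z e (u @ x) = CHF r0 r1 z (act r0 r1 x e) u ** CHF r0 r1 z e x"
  by (induction u) (auto simp: act_append matrix_mul_assoc)

lemma det_CHF: "det (CHF r0 r1 z e w) = 1"
  by (induction w) (auto simp: det_mul det_Xmat det_Lmat)

definition relators :: "bool list set" where
  "relators = {[True, True], [False, False, False]}"

definition reduced_word :: "bool list \<Rightarrow> bool" where
  "reduced_word w \<longleftrightarrow> (\<forall>g\<in>relators. \<not> sublist g w)"

fun inv_word :: "bool list \<Rightarrow> bool list" where
  "inv_word [] = []"
| "inv_word (a # w) = inv_word w @ (if a then [True] else [False, False])"

definition leading_rotations :: "bool list \<Rightarrow> nat" where
  "leading_rotations w = length (takeWhile Not w)"

lemma leading_rotations_simps [simp]: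
  "leading_rotations [] = 0"
  "leading_rotations (a # w) = (if a then 0 else Suc (leading_rotations w))"
  by (simp_all add: leading_rotations_def)

lemma reduced_word_Cons: "reduced_word (a # w) \<Longrightarrow> reduced_word w"
  by (auto simp: reduced_word_def sublist_Cons_right)

lemma reduced_word_leading_rotations_le_2:
  assumes "reduced_word w"
  shows "leading_rotations w \<le> 2"
proof (rule ccontr)
  assume "\<not> ?thesis"
  then obtain v where "w = [False, False, False] @ v"
    by (cases w; cases "tl w"; cases "tl (tl w)") (auto split: if_splits)
  with assms show False
    by (auto simp: reduced_word_def relators_def)
qed

lemma reduced_word_True_Cons:
  assumes "reduced_word (True # w)" "w \<noteq> []"
  shows "leading_rotations w \<in> {1, 2}"
proof -
  obtain v where "w = False # v"
    using assms by (cases w) (auto simp: reduced_word_def relators_def sublist_Cons_right)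
  then show ?thesis
    using reduced_word_leading_rotations_le_2[OF reduced_word_Cons[OF assms(1)]] by auto
qed

section \<open>Positive blocks\<close>

fun Lpow :: "nat \<Rightarrow> real^2^2" where
  "Lpow 0 = mat 1"
| "Lpow (Suc k) = Lmat ** Lpow k"

definition Xopt :: "bool \<Rightarrow> real \<Rightarrow> real^2^2" where
  "Xopt d a = (if d then Xmat a else mat 1)"

definition nonneg_mat :: "real^2^2 \<Rightarrow> bool" where
  "nonneg_mat P \<longleftrightarrow> (\<forall>i j. 0 \<le> P$i$j)"

definition off_diag_heavy :: "real \<Rightarrow> real^2^2 \<Rightarrow> bool" where
  "off_diag_heavy m P \<longleftrightarrow> m * P$2$2 \<le> P$1$2 \<or> m * P$1$1 \<le> P$2$1"

lemma nonneg_mat2 [simp]: "nonneg_mat (mat2 p q r t) \<longleftrightarrow> 0 \<le> p \<and> 0 \<le> q \<and> 0 \<le> r \<and> 0 \<le> t"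
  by (auto simp: nonneg_mat_def forall_2)

lemma nonneg_mat_one: "nonneg_mat (mat 1)"
  by (simp add: mat_1_eq_mat2)

lemma Xmat_Lpow_block:
  assumes "\<bar>a\<bar> \<le> M" "j \<in> {1, 2}" "nonneg_mat P"
  obtains B where "psl_eq (Xmat a ** Lpow j) B" "nonneg_mat (B ** P)"
    "off_diag_heavy (exp (- M)) (B ** P)"
proof -
  define s s' where "s = exp (a/2)" and "s' = exp (- a/2)"
  have s: "0 < s" "0 < s'"
    by (simp_all add: s_def s'_def)
  have "exp (- M) * s' \<le> s" "exp (- M) * s \<le> s'"
    using assms(1) by (simp_all add: s_def s'_def flip: exp_add)
  obtain p q r t where P: "P = mat2 p q r t"
    by (rule mat2_cases)
  with assms(3) have pqrt: "0 \<le> p" "0 \<le> q" "0 \<le> r" "0 \<le> t"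
    by simp_all
  consider "j = 1" | "j = 2"
    using assms(2) by blast
  then show thesis
  proof cases
    case 1
    have "Xmat a ** Lpow j = mat2 s s 0 s'"
      using 1 by (simp add: Xmat_def Lmat_def mat2_mult s_def s'_def)
    moreover have "mat2 s s 0 s' ** P = mat2 (s * p + s * r) (s * q + s * t) (s' * r) (s' * t)"
      by (simp add: P mat2_mult)
    moreover have "exp (- M) * (s' * t) \<le> s * q + s * t"
      using mult_right_mono[OF \<open>exp (- M) * s' \<le> s\<close> \<open>0 \<le> t\<close>] \<open>0 < s\<close> \<open>0 \<le> q\<close>
      by (simp add: mult.assoc add_increasing)
    ultimately show thesis
      using that[of "mat2 s s 0 s'"] s pqrt
      by (simp add: off_diag_heavy_def)
  next
    case 2
    have "Xmat a ** Lpow j = - mat2 s 0 s' s'"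
      using 2 by (simp add: Xmat_def Lmat_def mat_1_eq_mat2 mat2_mult uminus_mat2 s_def s'_def
          numeral_2_eq_2)
    moreover have "mat2 s 0 s' s' ** P = mat2 (s * p) (s * q) (s' * p + s' * r) (s' * q + s' * t)"
      by (simp add: P mat2_mult)
    moreover have "exp (- M) * (s * p) \<le> s' * p + s' * r"
      using mult_right_mono[OF \<open>exp (- M) * s \<le> s'\<close> \<open>0 \<le> p\<close>] \<open>0 < s'\<close> \<open>0 \<le> r\<close>
      by (simp add: mult.assoc add_increasing2)
    ultimately show thesis
      using that[of "mat2 s 0 s' s'"] s pqrt
      by (simp add: off_diag_heavy_def)
  qed
qed

(* Each case is refuted by the signs of the entries: e.g. for k = 0 the diagonal entries
   q exp (-a/2) >= 0 and -r exp (a/2) <= 0 cannot both lie near the same +-1. *)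
lemma nonneg_Lpow_Xopt_far_from_one:
  assumes "nonneg_mat P" "k \<le> 2" "k \<noteq> 0 \<or> d"
  shows "1/2 \<le> psl_dist (Lpow k ** P ** Xopt d a) (mat 1)"
proof (rule ccontr)
  define s s' where "s = exp (a/2)" and "s' = exp (- a/2)"
  have s: "0 < s" "0 < s'"
    by (simp_all add: s_def s'_def)
  obtain p q r t where P: "P = mat2 p q r t"
    by (rule mat2_cases)
  with assms(1) have pqrt: "0 \<le> p" "0 \<le> q" "0 \<le> r" "0 \<le> t"
    by simp_all
  with s have nonneg: "0 \<le> p * s" "0 \<le> q * s" "0 \<le> r * s" "0 \<le> t * s"
    "0 \<le> p * s'" "0 \<le> q * s'" "0 \<le> r * s'" "0 \<le> t * s'"
    by simp_all
  have X: "Xopt True a = mat2 0 (-s) s' 0" "Xopt False a = mat2 1 0 0 1"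
    by (simp_all add: Xopt_def Xmat_def mat_1_eq_mat2 s_def s'_def)
  assume "\<not> ?thesis"
  then obtain \<sigma> :: real where "\<sigma> = 1 \<or> \<sigma> = -1"
    and Q: "\<bar>(Lpow k ** P ** Xopt d a)$1$1 - \<sigma>\<bar> < 1/2" "\<bar>(Lpow k ** P ** Xopt d a)$1$2\<bar> < 1/2"
      "\<bar>(Lpow k ** P ** Xopt d a)$2$1\<bar> < 1/2" "\<bar>(Lpow k ** P ** Xopt d a)$2$2 - \<sigma>\<bar> < 1/2"
    using psl_dist_one_entries[of "Lpow k ** P ** Xopt d a" "1/2"] by (metis not_le)
  consider "k = 0" "d" | "k = 1" | "k = 2"
    using assms(2,3) by linarith
  then show False
  proof cases
    case 1
    then show False
      using Q \<open>\<sigma> = 1 \<or> \<sigma> = -1\<close> nonneg by (auto simp: P X mat_1_eq_mat2 mat2_mult abs_less_iff)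
  next
    case 2
    then have "Lpow k = mat2 0 1 (-1) (-1)"
      by (simp add: Lmat_def mat_1_eq_mat2 mat2_mult)
    then show False
      using Q \<open>\<sigma> = 1 \<or> \<sigma> = -1\<close> pqrt nonneg
      by (cases d) (auto simp: P X mat2_mult abs_less_iff algebra_simps)
  next
    case 3
    then have "Lpow k = mat2 (-1) (-1) 1 0"
      by (simp add: Lmat_def mat_1_eq_mat2 mat2_mult numeral_2_eq_2)
    then show False
      using Q \<open>\<sigma> = 1 \<or> \<sigma> = -1\<close> pqrt nonneg
      by (cases d) (auto simp: P X mat2_mult abs_less_iff algebra_simps)
  qed
qed

lemma nonneg_near_one_eq_one:
  assumes "nonneg_mat P" "P = mat 1 \<or> off_diag_heavy m P" "0 < m" "m \<le> 1"
    and "psl_dist P (mat 1) < m / 2"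
  shows "P = mat 1"
proof -
  obtain \<sigma> :: real where "\<sigma> = 1 \<or> \<sigma> = -1"
    and entries: "\<bar>P$1$1 - \<sigma>\<bar> < m / 2" "\<bar>P$1$2\<bar> < m / 2" "\<bar>P$2$1\<bar> < m / 2"
      "\<bar>P$2$2 - \<sigma>\<bar> < m / 2"
    using psl_dist_one_entries[OF assms(5)] by blast
  moreover have "0 \<le> P$1$1"
    using assms(1) by (simp add: nonneg_mat_def)
  ultimately have "\<sigma> = 1"
    using \<open>m \<le> 1\<close> unfolding abs_less_iff by auto
  then have "1/2 < P$1$1" "1/2 < P$2$2" "P$1$2 < m / 2" "P$2$1 < m / 2"
    using entries \<open>m \<le> 1\<close> unfolding abs_less_iff by auto
  moreover have "m * (1/2) < m * P$2$2" "m * (1/2) < m * P$1$1"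
    using \<open>1/2 < P$1$1\<close> \<open>1/2 < P$2$2\<close> \<open>0 < m\<close> by simp_all
  ultimately show ?thesis
    using assms(2) by (auto simp: off_diag_heavy_def)
qed

locale weighted_ribbon_graph =
  fixes E :: "'e set" and r0 r1 :: "'e \<Rightarrow> 'e" and z :: "'e \<Rightarrow> real"
  assumes finite_E: "finite E"
    and r0_permutes: "r0 permutes E" and r1_permutes: "r1 permutes E"
    and r0_cube: "\<And>e. e \<in> E \<Longrightarrow> r0 (r0 (r0 e)) = e"
    and r1_involution: "\<And>e. e \<in> E \<Longrightarrow> r1 (r1 e) = e"
    and z_r1: "\<And>e. e \<in> E \<Longrightarrow> z (r1 e) = z e"
begin

lemma act_in_E: "e \<in> E \<Longrightarrow> act r0 r1 w e \<in> E"
  by (induction w)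
    (auto simp: permutes_in_image[OF r0_permutes] permutes_in_image[OF r1_permutes])

lemma relator_acts_trivially:
  assumes "e \<in> E" "g \<in> relators"
  shows "act r0 r1 g e = e" "psl_eq (CHF r0 r1 z e g) (mat 1)"
  using assms r0_cube r1_involution z_r1
  by (auto simp: relators_def Xmat_mult_self Lmat_cube matrix_mul_assoc)

lemma delete_relator:
  assumes "e \<in> E" "g \<in> relators"
  shows "act r0 r1 (u @ g @ x) e = act r0 r1 (u @ x) e"
    and "psl_eq (CHF r0 r1 z e (u @ g @ x)) (CHF r0 r1 z e (u @ x))"
proof -
  define y where "y = act r0 r1 x e"
  have "y \<in> E"
    using act_in_E assms(1) by (simp add: y_def)
  then have g: "act r0 r1 g y = y" "psl_eq (CHF r0 r1 z y g) (mat 1)"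
    using relator_acts_trivially assms(2) by auto
  show "act r0 r1 (u @ g @ x) e = act r0 r1 (u @ x) e"
    by (simp add: act_append g flip: y_def)
  have "CHF r0 r1 z e (u @ g @ x) = CHF r0 r1 z y u ** CHF r0 r1 z y g ** CHF r0 r1 z e x"
    by (simp add: CHF_append act_append g matrix_mul_assoc flip: y_def)
  moreover have "CHF r0 r1 z e (u @ x) = CHF r0 r1 z y u ** mat 1 ** CHF r0 r1 z e x"
    by (simp add: CHF_append flip: y_def)
  ultimately show "psl_eq (CHF r0 r1 z e (u @ g @ x)) (CHF r0 r1 z e (u @ x))"
    by (metis psl_eq_mult psl_eq_refl g(2))
qed

lemma exists_reduced_word:
  assumes "e \<in> E"
  shows "\<exists>w'. reduced_word w' \<and> psl_eq (CHF r0 r1 z e w) (CHF r0 r1 z e w')"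
proof (induction "length w" arbitrary: w rule: less_induct)
  case less
  show ?case
  proof (cases "reduced_word w")
    case False
    then obtain u g x where w: "w = u @ g @ x" and "g \<in> relators"
      by (auto simp: reduced_word_def sublist_def)
    then have "length (u @ x) < length w"
      by (auto simp: relators_def)
    then show ?thesis
      using less delete_relator(2)[OF assms \<open>g \<in> relators\<close>] w by (metis psl_eq_trans)
  qed auto
qed

lemma inv_word_cancel:
  assumes "e \<in> E"
  shows "act r0 r1 (inv_word w @ w) e = e \<and> psl_eq (CHF r0 r1 z e (inv_word w @ w)) (mat 1)"
proof (induction w)
  case (Cons a w)
  have "(if a then [True] else [False, False]) @ [a] \<in> relators"
    by (simp add: relators_def)
  moreover have "inv_word (a # w) @ a # w = inv_word w @ ((if a then [True] else [False, False]) @ [a]) @ w"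
    by simp
  ultimately show ?case
    using delete_relator[OF assms] Cons by (metis psl_eq_trans)
qed simp

lemma Delta_psl_subgroup:
  assumes "\<epsilon> \<in> E"
  shows "psl_subgroup (Delta r0 r1 z \<epsilon>)"
  unfolding psl_subgroup_def
proof (intro conjI ballI)
  let ?D = "Delta r0 r1 z \<epsilon>"
  have word_in_Delta: "CHF r0 r1 z \<epsilon> w \<in> ?D" if "act r0 r1 w \<epsilon> = \<epsilon>" for w
    using that by (auto simp: Delta_def)
  show "det A = 1" if "A \<in> ?D" for A
    using that by (auto simp: Delta_def psl_eq_def det_CHF det_uminus_2x2)
  show "\<exists>A\<in>?D. psl_eq A (mat 1)"
    using word_in_Delta[of "[]"] by force
  show "\<exists>C\<in>?D. psl_eq C (A ** B)" if AB: "A \<in> ?D" "B \<in> ?D" for A B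
  proof -
    obtain u w where "act r0 r1 u \<epsilon> = \<epsilon>" "psl_eq (CHF r0 r1 z \<epsilon> u) A"
      and "act r0 r1 w \<epsilon> = \<epsilon>" "psl_eq (CHF r0 r1 z \<epsilon> w) B"
      using AB unfolding Delta_def by blast
    then show ?thesis
      using word_in_Delta[of "u @ w"] by (auto simp: act_append CHF_append intro!: psl_eq_mult)
  qed
  show "\<exists>C\<in>?D. psl_eq C (matrix_inv A)" if A: "A \<in> ?D" for A
  proof -
    obtain w where w: "act r0 r1 w \<epsilon> = \<epsilon>" "psl_eq (CHF r0 r1 z \<epsilon> w) A"
      using A unfolding Delta_def by blast
    have "act r0 r1 (inv_word w) \<epsilon> = \<epsilon>"
      and "psl_eq (CHF r0 r1 z \<epsilon> (inv_word w) ** CHF r0 r1 z \<epsilon> w) (mat 1)"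
      using inv_word_cancel[OF assms, of w] w(1) by (simp_all add: act_append CHF_append)
    moreover have "psl_eq (CHF r0 r1 z \<epsilon> (inv_word w) ** A)
        (CHF r0 r1 z \<epsilon> (inv_word w) ** CHF r0 r1 z \<epsilon> w)"
      using w(2) by (simp add: psl_eq_mult psl_eq_sym)
    ultimately show ?thesis
      using word_in_Delta psl_eq_matrix_inv psl_eq_trans by blast
  qed
qed

definition z_bound :: real where
  "z_bound = (\<Sum>e\<in>E. \<bar>z e\<bar>)"

lemma abs_z_le_z_bound: "e \<in> E \<Longrightarrow> \<bar>z e\<bar> \<le> z_bound"
  unfolding z_bound_def by (rule member_le_sum) (auto simp: finite_E)

lemma z_bound_nonneg: "0 \<le> z_bound"
  by (simp add: z_bound_def sum_nonneg)

(* The trailing factor is X_(z e) because the last letter of a word acts first, on e. *)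
lemma reduced_word_normal_form:
  assumes "e \<in> E"
  shows "reduced_word w \<Longrightarrow>
    \<exists>P d. nonneg_mat P \<and> (P = mat 1 \<or> off_diag_heavy (exp (- z_bound)) P)
      \<and> psl_eq (Lpow (leading_rotations w) ** P ** Xopt d (z e)) (CHF r0 r1 z e w)"
proof (induction w)
  case Nil
  show ?case
    by (intro exI[of _ "mat 1"] exI[of _ False]) (simp add: Xopt_def nonneg_mat_one)
next
  case (Cons a w)
  then obtain P d where P: "nonneg_mat P" "P = mat 1 \<or> off_diag_heavy (exp (- z_bound)) P"
    and w: "psl_eq (Lpow (leading_rotations w) ** P ** Xopt d (z e)) (CHF r0 r1 z e w)"
    using reduced_word_Cons by blast
  show ?case
  proof (cases a)
    case False
    have "psl_eq (Lpow (leading_rotations (a # w)) ** P ** Xopt d (z e)) (CHF r0 r1 z e (a # w))"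
      using psl_eq_mult[OF psl_eq_refl[of Lmat] w] False by (simp add: matrix_mul_assoc)
    with P show ?thesis
      by blast
  next
    case True
    show ?thesis
    proof (cases "w = []")
      case True
      with \<open>a\<close> show ?thesis
        by (intro exI[of _ "mat 1"] exI[of _ True]) (simp add: Xopt_def nonneg_mat_one)
    next
      case False
      let ?b = "z (act r0 r1 w e)"
      have "\<bar>?b\<bar> \<le> z_bound"
        using abs_z_le_z_bound act_in_E assms by blast
      moreover have "leading_rotations w \<in> {1, 2}"
        using reduced_word_True_Cons[of w] Cons.prems \<open>a\<close> False by simp
      ultimately obtain B where B: "psl_eq (Xmat ?b ** Lpow (leading_rotations w)) B"
        "nonneg_mat (B ** P)" "off_diag_heavy (exp (- z_bound)) (B ** P)"
        using Xmat_Lpow_block P(1) by blast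
      have "psl_eq (B ** P ** Xopt d (z e))
          (Xmat ?b ** (Lpow (leading_rotations w) ** P ** Xopt d (z e)))"
        using psl_eq_mult[OF psl_eq_mult[OF psl_eq_sym[OF B(1)] psl_eq_refl] psl_eq_refl]
        by (simp add: matrix_mul_assoc)
      also have "psl_eq \<dots> (Xmat ?b ** CHF r0 r1 z e w)"
        using w by (simp add: psl_eq_mult)
      finally have "psl_eq (Lpow (leading_rotations (a # w)) ** (B ** P) ** Xopt d (z e))
          (CHF r0 r1 z e (a # w))"
        using \<open>a\<close> by simp
      with B(2,3) show ?thesis
        by blast
    qed
  qed
qed

lemma CHF_near_one:
  assumes "e \<in> E" "psl_dist (CHF r0 r1 z e w) (mat 1) < exp (- z_bound) / 2"
  shows "psl_eq (CHF r0 r1 z e w) (mat 1)"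
proof -
  obtain w' where "reduced_word w'" and "psl_eq (CHF r0 r1 z e w) (CHF r0 r1 z e w')"
    using exists_reduced_word[OF assms(1)] by blast
  moreover obtain P d where P: "nonneg_mat P" "P = mat 1 \<or> off_diag_heavy (exp (- z_bound)) P"
    and "psl_eq (Lpow (leading_rotations w') ** P ** Xopt d (z e)) (CHF r0 r1 z e w')"
    using reduced_word_normal_form[OF assms(1) \<open>reduced_word w'\<close>] by blast
  ultimately have Q: "psl_eq (CHF r0 r1 z e w) (Lpow (leading_rotations w') ** P ** Xopt d (z e))"
    using psl_eq_sym psl_eq_trans by blast
  have m: "0 < exp (- z_bound)" "exp (- z_bound) \<le> 1"
    using z_bound_nonneg by auto
  have near: "psl_dist (Lpow (leading_rotations w') ** P ** Xopt d (z e)) (mat 1) < exp (- z_bound) / 2"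
    using assms(2) psl_dist_cong[OF Q psl_eq_refl] by simp
  have "\<not> (leading_rotations w' \<noteq> 0 \<or> d)"
  proof
    assume "leading_rotations w' \<noteq> 0 \<or> d"
    then have "1/2 \<le> psl_dist (Lpow (leading_rotations w') ** P ** Xopt d (z e)) (mat 1)"
      using nonneg_Lpow_Xopt_far_from_one[OF P(1)] reduced_word_leading_rotations_le_2
        \<open>reduced_word w'\<close> by blast
    with near m(2) show False
      by linarith
  qed
  then have "leading_rotations w' = 0 \<and> \<not> d"
    by blast
  moreover from this have "P = mat 1"
    using nonneg_near_one_eq_one[OF P m] near by (simp add: Xopt_def)
  ultimately show ?thesis
    using Q by (simp add: Xopt_def)
qed

lemma Delta_one_isolated:
  assumes "\<epsilon> \<in> E" "A \<in> Delta r0 r1 z \<epsilon>" "psl_dist A (mat 1) < exp (- z_bound) / 2"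
  shows "psl_eq A (mat 1)"
proof -
  obtain w where "psl_eq (CHF r0 r1 z \<epsilon> w) A"
    using assms(2) unfolding Delta_def by blast
  then show ?thesis
    using CHF_near_one[OF assms(1)] assms(3) psl_dist_cong psl_eq_sym psl_eq_trans psl_eq_refl
    by metis
qed

lemma Delta_fuchsian:
  assumes "\<epsilon> \<in> E"
  shows "fuchsian (Delta r0 r1 z \<epsilon>)"
  unfolding fuchsian_def
proof
  show "psl_subgroup (Delta r0 r1 z \<epsilon>)"
    using assms by (rule Delta_psl_subgroup)
  then show "psl_discrete (Delta r0 r1 z \<epsilon>)"
    by (rule psl_discrete_if_one_isolated[where c = "exp (- z_bound) / 2"])
      (use Delta_one_isolated[OF assms] in auto)
qed

end

theorem mainTheorem2:
  fixes E :: "'e set" and r0 r1 :: "'e \<Rightarrow> 'e" and z :: "'e \<Rightarrow> real" and \<epsilon> :: 'e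
  assumes "trivalent_ribbon_graph E r0 r1"
    and "connected_rg E r0 r1"
    and "\<forall>g\<in>E. z (r1 g) = z g"
    and "\<epsilon> \<in> E"
  shows "fuchsian (Delta r0 r1 z \<epsilon>)"
proof -
  interpret weighted_ribbon_graph E r0 r1 z
    using assms(1,3) by unfold_locales (auto simp: trivalent_ribbon_graph_def)
  show ?thesis
    using assms(4) by (rule Delta_fuchsian)
qed

end
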